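(* Let $k,\ell,n,p$ be positive integers, and let $C\in\mathbb{R}^{k\times \ell}$, $A\in\mathbb{R}^{n\times p}$, $M\in\mathbb{R}^{k\times k}$ symmetric positive semidefinite, and $B\in\mathbb{R}^{k\times n}$ injective (i.e. $\mathrm{null}(B)=\{0\}$). Define the block matrix \[ \mathcal{M}:=\begin{bmatrix} -C^T & 0\\ 0 & -A^T\\ M & -B\\ B^T & 0\end{bmatrix}\in\mathbb{R}^{(\ell+p+k+n)\times(k+n)}. \] Then $\mathcal{M}$ is injective if and only if \[ \mathrm{null}(M)\cap\mathrm{null}(B^T)\cap\mathrm{null}(C^T)=\{0\}. \]
   Context: This matrix arises from the KKT system of the problem of minimizing over $y\in\mathbb{R}^n$ the piecewise linear quadratic function $\rho(y)=\sup_{u\in\mathbb{R}^k:\,C^Tu\le c}\{\langle u,b+By\rangle-\tfrac12\langle u,Mu\rangle\}$ subject to $A^Ty\le a$, where $b\in\mathbb{R}^k$, $c\in\mathbb{R}^\ell$, $a\in\mathbb{R}^p$. $\mathrm{null}(\cdot)$ denotes the null space. *)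

theory Defs
  imports "HOL-Analysis.Analysis"
begin

definition mat_null :: "real^'c^'r \<Rightarrow> (real^'c) set" where
  "mat_null X = {x. X *v x = 0}"

text \<open>The block matrix
  [ -C^T 0 ; 0 -A^T ; M -B ; B^T 0 ], with row blocks indexed by 'l, 'p, 'k, 'n
  and column blocks indexed by 'k, 'n.
  C : k x l, A : n x p, M : k x k, B : k x n.\<close>
definition kkt_block ::
  "real^'l^'k \<Rightarrow> real^'p^'n \<Rightarrow> real^'k^'k \<Rightarrow> real^'n^'k \<Rightarrow>
   real^('k + 'n)^('l + ('p + ('k + 'n)))" where
  "kkt_block C A M B = (\<chi> i j.
     case i of
       Inl r \<Rightarrow> (case j of Inl c \<Rightarrow> - (transpose C $ r $ c) | Inr c \<Rightarrow> 0)
     | Inr (Inl r) \<Rightarrow> (case j of Inl c \<Rightarrow> 0 | Inr c \<Rightarrow> - (transpose A $ r $ c))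
     | Inr (Inr (Inl r)) \<Rightarrow> (case j of Inl c \<Rightarrow> M $ r $ c | Inr c \<Rightarrow> - (B $ r $ c))
     | Inr (Inr (Inr r)) \<Rightarrow> (case j of Inl c \<Rightarrow> transpose B $ r $ c | Inr c \<Rightarrow> 0))"

end

theory Submission
  imports Defs
begin

text \<open>A vector z in the null space of the block matrix splits as (u, y) with C^T u = 0,
  A^T y = 0, B^T u = 0 and M u = B y. Then u \<bullet> M u = u \<bullet> B y = B^T u \<bullet> y = 0, which for a
  symmetric positive semidefinite M forces M u = 0; hence B y = 0 and y = 0 by injectivity of B.\<close>

lemma linear_term_zero_if_quadratic_nonneg:
  fixes b c :: real
  assumes nonneg: "\<And>t. 0 \<le> b * t + c * t\<^sup>2"
  shows "b = 0"
proof (rule ccontr)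
  assume "b \<noteq> 0"
  define d where "d = \<bar>c\<bar> + 1"
  have "d > 0" "c \<le> d - 1" by (auto simp: d_def)
  have "0 \<le> b * (- b / d) + c * (- b / d)\<^sup>2" by (rule nonneg)
  also have "\<dots> = b\<^sup>2 * (c - d) / d\<^sup>2"
    using \<open>d > 0\<close> by (simp add: field_simps power2_eq_square)
  also have "\<dots> < 0"
    using \<open>b \<noteq> 0\<close> \<open>d > 0\<close> \<open>c \<le> d - 1\<close> by (simp add: divide_neg_pos mult_pos_neg)
  finally show False by simp
qed

lemma psd_quadratic_form_eq_0_imp_mult_eq_0:
  fixes M :: "real^'k::finite^'k"
  assumes sym: "transpose M = M" and psd: "\<forall>x. 0 \<le> x \<bullet> (M *v x)"
    and zero: "u \<bullet> (M *v u) = 0"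
  shows "M *v u = 0"
proof -
  let ?v = "M *v u"
  have swap: "u \<bullet> (M *v ?v) = ?v \<bullet> ?v"
    by (metis dot_lmul_matrix inner_commute sym vector_transpose_matrix)
  have "0 \<le> (?v \<bullet> ?v) * (2 * t) + (?v \<bullet> (M *v ?v)) * t\<^sup>2" for t
  proof -
    have "0 \<le> (u + t *\<^sub>R ?v) \<bullet> (M *v (u + t *\<^sub>R ?v))" using psd by blast
    also have "\<dots> = u \<bullet> (M *v u) + t * (u \<bullet> (M *v ?v)) + t * (?v \<bullet> ?v) + t\<^sup>2 * (?v \<bullet> (M *v ?v))"
      by (simp add: matrix_vector_right_distrib inner_add_left inner_add_right
          matrix_vector_mult_scaleR power2_eq_square algebra_simps)
    finally show ?thesis using zero swap by (simp add: algebra_simps)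
  qed
  then have "2 * (?v \<bullet> ?v) = 0"
    by (intro linear_term_zero_if_quadratic_nonneg[of _ "?v \<bullet> (M *v ?v)"]) (simp add: ac_simps)
  then show ?thesis by simp
qed

definition vec_left :: "'a^('m::finite + 'n::finite) \<Rightarrow> 'a^'m" where
  "vec_left z = (\<chi> c. z $ Inl c)"

definition vec_right :: "'a^('m::finite + 'n::finite) \<Rightarrow> 'a^'n" where
  "vec_right z = (\<chi> c. z $ Inr c)"

definition vec_join :: "'a^'m::finite \<Rightarrow> 'a^'n::finite \<Rightarrow> 'a^('m + 'n)" where
  "vec_join u y = (\<chi> j. case j of Inl c \<Rightarrow> u $ c | Inr c \<Rightarrow> y $ c)"

lemma vec_left_join [simp]: "vec_left (vec_join u y) = u"
  and vec_right_join [simp]: "vec_right (vec_join u y) = y"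
  by (simp_all add: vec_left_def vec_right_def vec_join_def vec_eq_iff)

lemma vec_join_split: "vec_join (vec_left z) (vec_right z) = z"
  by (simp add: vec_left_def vec_right_def vec_join_def vec_eq_iff split: sum.split)

lemma vec_left_0 [simp]: "vec_left 0 = 0"
  and vec_right_0 [simp]: "vec_right 0 = 0"
  by (simp_all add: vec_left_def vec_right_def vec_eq_iff)

lemma vec_join_eq_0_iff [simp]: "vec_join u y = 0 \<longleftrightarrow> u = 0 \<and> y = 0"
proof
  show "vec_join u y = 0 \<Longrightarrow> u = 0 \<and> y = 0"
    by (metis vec_left_join vec_right_join vec_left_0 vec_right_0)
qed (simp add: vec_join_def vec_eq_iff split: sum.split)

lemma vec_join_image_eq_0_iff:
  fixes U :: "('a::zero^'m::finite) set"
  assumes "0 \<in> U"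
  shows "(\<lambda>u. vec_join u (0 :: 'a^'n::finite)) ` U = {0} \<longleftrightarrow> U = {0}"
    (is "?f ` U = _ \<longleftrightarrow> _")
proof
  assume image_0: "?f ` U = {0}"
  show "U = {0}"
  proof (intro set_eqI iffI)
    fix u assume "u \<in> U"
    then have "?f u \<in> {0}" unfolding image_0[symmetric] by (rule imageI)
    then show "u \<in> {0}" by simp
  qed (use assms in simp)
qed simp

lemma sum_UNIV_Plus:
  "sum g (UNIV :: ('a::finite + 'b::finite) set) = (\<Sum>x\<in>UNIV. g (Inl x)) + (\<Sum>x\<in>UNIV. g (Inr x))"
  using sum.Plus[of "UNIV :: 'a set" "UNIV :: 'b set" g] by (simp add: o_def)

lemma kkt_block_mult:
  "kkt_block C A M B *v z =
     vec_join (- (transpose C *v vec_left z))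
       (vec_join (- (transpose A *v vec_right z))
         (vec_join (M *v vec_left z - B *v vec_right z) (transpose B *v vec_left z)))"
  unfolding vec_eq_iff
  by (simp add: kkt_block_def vec_join_def vec_left_def vec_right_def matrix_vector_mult_def
      sum_UNIV_Plus sum_negf sum_subtractf split: sum.split)

lemma mat_null_kkt_block:
  fixes M :: "real^'k::finite^'k" and B :: "real^'n::finite^'k"
  assumes M_sym: "transpose M = M"
    and M_psd: "\<forall>x. 0 \<le> x \<bullet> (M *v x)"
    and B_inj: "mat_null B = {0}"
  shows "mat_null (kkt_block C A M B) =
    (\<lambda>u. vec_join u 0) ` (mat_null M \<inter> mat_null (transpose B) \<inter> mat_null (transpose C))"
    (is "_ = ?N")
proof (intro set_eqI iffI)
  fix z assume "z \<in> mat_null (kkt_block C A M B)"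
  then have "transpose C *v vec_left z = 0" "transpose A *v vec_right z = 0"
    and MBy: "M *v vec_left z = B *v vec_right z" and BTu: "transpose B *v vec_left z = 0"
    by (simp_all add: mat_null_def kkt_block_mult)
  have "vec_left z \<bullet> (M *v vec_left z) = (transpose B *v vec_left z) \<bullet> vec_right z"
    unfolding MBy by (metis dot_lmul_matrix inner_commute vector_transpose_matrix)
  then have "M *v vec_left z = 0"
    using BTu by (intro psd_quadratic_form_eq_0_imp_mult_eq_0[OF M_sym M_psd]) simp
  moreover have "vec_right z = 0"
    using B_inj MBy \<open>M *v vec_left z = 0\<close> by (auto simp: mat_null_def)
  moreover have "z = vec_join (vec_left z) 0"
    using \<open>vec_right z = 0\<close> vec_join_split[of z] by simp
  ultimately show "z \<in> ?N"
    using \<open>transpose C *v vec_left z = 0\<close> BTu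
    by (intro image_eqI[of _ _ "vec_left z"]) (auto simp: mat_null_def)
next
  fix z assume "z \<in> ?N"
  then show "z \<in> mat_null (kkt_block C A M B)"
    by (auto simp: mat_null_def kkt_block_mult)
qed

theorem theorem5p1:
  fixes C :: "real^'l::finite^'k::finite"
    and A :: "real^'p::finite^'n::finite"
    and M :: "real^'k^'k"
    and B :: "real^'n^'k"
  assumes M_sym: "transpose M = M"
    and M_psd: "\<forall>x. 0 \<le> x \<bullet> (M *v x)"
    and B_inj: "mat_null B = {0}"
  shows "mat_null (kkt_block C A M B) = {0} \<longleftrightarrow>
         mat_null M \<inter> mat_null (transpose B) \<inter> mat_null (transpose C) = {0}"
  unfolding mat_null_kkt_block[OF M_sym M_psd B_inj]
  by (rule vec_join_image_eq_0_iff) (simp add: mat_null_def)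

end
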